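(* Let $(U,V)$ be a one-dimensional robot game. Its set of winning counter values is different from $\{0\}$ if and only if there exists a counter value $x\neq 0$ such that for every $v\in V$ there is $u\in U$ with $u+v=-x$.
   Context: A robot game in dimension one is a pair $(U,V)$ of finite nonempty subsets of $\mathbb{Z}$; $U$ belongs to the reacher and $V$ to the opponent. From an initial counter value $x_0\in\mathbb{Z}$, a play proceeds in rounds: in a round starting at counter value $x$, the opponent chooses $v\in V$ and the counter becomes $x+v$, then the reacher chooses $u\in U$ and the counter becomes $x+v+u$, where the round ends. The reacher wins the play if some round ends at $0$; by convention the reacher wins immediately if the play starts at $0$ (so $0$ is always winning). Strategies are functions from play prefixes to moves. A counter value $x$ is winning if the reacher has a strategy such that, against every opponent strategy, the play from $x$ is won by the reacher. (The paper calls the winning set trivial when it is $\{0\}$.) *)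

theory Defs
  imports Main
begin

text \<open>A play prefix (history) is the list of all counter values visited so far,
  starting with the initial value: x0, x0+v1, x0+v1+u1, x0+v1+u1+v2, ...
  (moves are recoverable as differences).\<close>

type_synonym history = "int list"

fun play_hist :: "(history \<Rightarrow> int) \<Rightarrow> (history \<Rightarrow> int) \<Rightarrow> int \<Rightarrow> nat \<Rightarrow> history" where
  "play_hist \<sigma> \<tau> x0 0 = [x0]"
| "play_hist \<sigma> \<tau> x0 (Suc n) =
     (let h = play_hist \<sigma> \<tau> x0 n;
          y = last h + \<tau> h;
          h' = h @ [y]
      in h' @ [y + \<sigma> h'])"

definition strategy :: "int set \<Rightarrow> (history \<Rightarrow> int) \<Rightarrow> bool" where
  "strategy M s \<longleftrightarrow> (\<forall>h. s h \<in> M)"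

definition reacher_wins_play :: "(history \<Rightarrow> int) \<Rightarrow> (history \<Rightarrow> int) \<Rightarrow> int \<Rightarrow> bool" where
  "reacher_wins_play \<sigma> \<tau> x0 \<longleftrightarrow> (\<exists>n. last (play_hist \<sigma> \<tau> x0 n) = 0)"

definition winning :: "int set \<Rightarrow> int set \<Rightarrow> int \<Rightarrow> bool" where
  "winning U V x0 \<longleftrightarrow>
     (\<exists>\<sigma>. strategy U \<sigma> \<and> (\<forall>\<tau>. strategy V \<tau> \<longrightarrow> reacher_wins_play \<sigma> \<tau> x0))"

definition winning_set :: "int set \<Rightarrow> int set \<Rightarrow> int set" where
  "winning_set U V = {x. winning U V x}"

end

theory Submission
  imports Defs
begin

text \<open>If from some \<open>x \<noteq> 0\<close> every opponent move can be answered by a move back to 0, the reacher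
  wins from \<open>x\<close> in one round. Otherwise every nonzero counter value admits an opponent move
  after which no reacher move reaches 0, and the opponent playing such moves keeps the counter
  away from 0 forever.\<close>

lemma last_play_hist_Suc [simp]:
  "last (play_hist \<sigma> \<tau> x0 (Suc n)) =
     last (play_hist \<sigma> \<tau> x0 n) + \<tau> (play_hist \<sigma> \<tau> x0 n)
     + \<sigma> (play_hist \<sigma> \<tau> x0 n @ [last (play_hist \<sigma> \<tau> x0 n) + \<tau> (play_hist \<sigma> \<tau> x0 n)])"
  by (simp add: Let_def)

definition greedy_move :: "int set \<Rightarrow> (history \<Rightarrow> int \<Rightarrow> bool) \<Rightarrow> history \<Rightarrow> int" where
  "greedy_move M P h = (if \<exists>m\<in>M. P h m then SOME m. m \<in> M \<and> P h m else SOME m. m \<in> M)"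

lemma strategy_greedy_move:
  assumes "M \<noteq> {}"
  shows "strategy M (greedy_move M P)"
  unfolding strategy_def
proof
  fix h
  show "greedy_move M P h \<in> M"
  proof (cases "\<exists>m\<in>M. P h m")
    case True
    then have "\<exists>m. m \<in> M \<and> P h m" by blast
    from someI_ex[OF this] True show ?thesis by (simp add: greedy_move_def)
  next
    case False
    from assms have "\<exists>m. m \<in> M" by blast
    from someI_ex[OF this] False show ?thesis by (simp add: greedy_move_def)
  qed
qed

lemma greedy_move_satisfies:
  assumes "\<exists>m\<in>M. P h m"
  shows "P h (greedy_move M P h)"
proof -
  from assms have "\<exists>m. m \<in> M \<and> P h m" by blast
  from someI_ex[OF this] assms show ?thesis by (simp add: greedy_move_def)
qed

lemma winning_zero:
  assumes "U \<noteq> {}"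
  shows "winning U V 0"
proof -
  have "reacher_wins_play \<sigma> \<tau> 0" for \<sigma> \<tau>
    unfolding reacher_wins_play_def by (rule exI[of _ 0]) simp
  with strategy_greedy_move[OF assms] show ?thesis
    unfolding winning_def by blast
qed

lemma winning_if_returnable:
  assumes "U \<noteq> {}" and returnable: "\<forall>v\<in>V. \<exists>u\<in>U. u + v = - x"
  shows "winning U V x"
proof -
  define \<sigma> where "\<sigma> = greedy_move U (\<lambda>h u. u + last h = 0)"
  have "reacher_wins_play \<sigma> \<tau> x" if "strategy V \<tau>" for \<tau>
  proof -
    let ?y = "x + \<tau> [x]"
    have "\<tau> [x] \<in> V"
      using that by (simp add: strategy_def)
    with returnable obtain u where "u \<in> U" "u + ?y = 0"
      by fastforce
    then have "\<sigma> [x, ?y] + ?y = 0"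
      unfolding \<sigma>_def using greedy_move_satisfies[of U "\<lambda>h u. u + last h = 0" "[x, ?y]"] by auto
    then have "last (play_hist \<sigma> \<tau> x 1) = 0"
      by (simp add: add.commute)
    then show ?thesis
      unfolding reacher_wins_play_def by blast
  qed
  with strategy_greedy_move[OF assms(1)] show ?thesis
    unfolding winning_def \<sigma>_def by blast
qed

lemma not_winning_if_avoidable:
  assumes "V \<noteq> {}" and "x \<noteq> 0"
    and avoidable: "\<And>y. y \<noteq> 0 \<Longrightarrow> \<exists>v\<in>V. \<forall>u\<in>U. u + v \<noteq> - y"
  shows "\<not> winning U V x"
proof
  assume "winning U V x"
  define \<tau> where "\<tau> = greedy_move V (\<lambda>h v. \<forall>u\<in>U. u + v \<noteq> - last h)"
  have \<tau>_avoids: "\<forall>u\<in>U. u + \<tau> h \<noteq> - last h" if "last h \<noteq> 0" for h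
    unfolding \<tau>_def using avoidable[OF that] by (rule greedy_move_satisfies)
  from \<open>winning U V x\<close> strategy_greedy_move[OF assms(1)] obtain \<sigma>
    where "strategy U \<sigma>" and "reacher_wins_play \<sigma> \<tau> x"
    unfolding winning_def \<tau>_def by blast
  have "last (play_hist \<sigma> \<tau> x n) \<noteq> 0" for n
  proof (induction n)
    case 0
    with \<open>x \<noteq> 0\<close> show ?case by simp
  next
    case (Suc n)
    let ?h = "play_hist \<sigma> \<tau> x n"
    have "\<forall>u\<in>U. u + \<tau> ?h \<noteq> - last ?h"
      using \<tau>_avoids[OF Suc.IH] .
    moreover have "\<sigma> (?h @ [last ?h + \<tau> ?h]) \<in> U"
      using \<open>strategy U \<sigma>\<close> by (simp add: strategy_def)
    ultimately have "\<sigma> (?h @ [last ?h + \<tau> ?h]) + \<tau> ?h \<noteq> - last ?h"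
      by blast
    then show ?case
      unfolding last_play_hist_Suc by linarith
  qed
  with \<open>reacher_wins_play \<sigma> \<tau> x\<close> show False
    unfolding reacher_wins_play_def by blast
qed

theorem proposition4:
  fixes U V :: "int set"
  assumes "finite U" "U \<noteq> {}" "finite V" "V \<noteq> {}"
  shows "winning_set U V \<noteq> {0} \<longleftrightarrow> (\<exists>x. x \<noteq> 0 \<and> (\<forall>v\<in>V. \<exists>u\<in>U. u + v = - x))"
    (is "_ \<longleftrightarrow> (\<exists>x. x \<noteq> 0 \<and> ?returnable x)")
proof -
  have "0 \<in> winning_set U V"
    using winning_zero[OF assms(2)] by (simp add: winning_set_def)
  then have "winning_set U V \<noteq> {0} \<longleftrightarrow> (\<exists>x. x \<noteq> 0 \<and> winning U V x)"
    by (auto simp: winning_set_def)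
  also have "\<dots> \<longleftrightarrow> (\<exists>x. x \<noteq> 0 \<and> ?returnable x)"
  proof
    assume "\<exists>x. x \<noteq> 0 \<and> winning U V x"
    then obtain x where "x \<noteq> 0" "winning U V x" by blast
    show "\<exists>x. x \<noteq> 0 \<and> ?returnable x"
    proof (rule ccontr)
      assume "\<nexists>x. x \<noteq> 0 \<and> ?returnable x"
      then have "\<exists>v\<in>V. \<forall>u\<in>U. u + v \<noteq> - y" if "y \<noteq> 0" for y
        using that by blast
      from not_winning_if_avoidable[OF assms(4) \<open>x \<noteq> 0\<close> this] \<open>winning U V x\<close>
      show False by blast
    qed
  qed (use winning_if_returnable[OF assms(2)] in blast)
  finally show ?thesis .
qed

end
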